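(* Let $M,N\ge0$ be integers and $a,b,c,d,q$ generic complex parameters. For all $\alpha,\beta\in\{0,1\}$, all $0\le k\le M$, $0\le j\le N$ and $0\le l\le M+N$, $$R_{k+j}^l(a,b,c,d;M+N;q)=\sum_{\substack{m+n=l\\0\le m\le M,\ 0\le n\le N}}R_k^m\big(aq^{\alpha j},bq^{\beta(N-j)},c,d;M;q\big)\,R_j^n\big(aq^{(1-\alpha)k},bq^{(1-\beta)(M-k)},cq^m,dq^{M-m};N;q\big).$$
   Context: $h_k(x;a)=\prod_{j=0}^{k-1}(1-axq^j+a^2q^{2j})$. For generic parameters, $R_k^l(a,b,c,d;N;q)$ ($0\le k,l\le N$) are the unique coefficients with $h_k(x;a)h_{N-k}(x;b)=\sum_{l=0}^N R_k^l(a,b,c,d;N;q)h_l(x;c)h_{N-l}(x;d)$ as polynomials in $x$. *)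

theory Defs
  imports Complex_Main "HOL-Computational_Algebra.Polynomial"
begin

definition hpoly :: "complex \<Rightarrow> complex \<Rightarrow> nat \<Rightarrow> complex poly" where
  "hpoly a q k = (\<Prod>j<k. [: 1 + a^2 * q^(2*j), - (a * q^j) :])"

definition cdbasis :: "complex \<Rightarrow> complex \<Rightarrow> nat \<Rightarrow> complex \<Rightarrow> nat \<Rightarrow> complex poly" where
  "cdbasis c d N q l = hpoly c q l * hpoly d q (N - l)"

text \<open>Genericity condition: the polynomials h_l(x;c) h_{N-l}(x;d), 0 \<le> l \<le> N,
  are linearly independent, so the coefficients R are uniquely determined.\<close>
definition generic_cd :: "complex \<Rightarrow> complex \<Rightarrow> nat \<Rightarrow> complex \<Rightarrow> bool" where
  "generic_cd c d N q \<longleftrightarrow>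
     (\<forall>r :: nat \<Rightarrow> complex. (\<Sum>l\<le>N. smult (r l) (cdbasis c d N q l)) = 0 \<longrightarrow> (\<forall>l\<le>N. r l = 0))"

definition Rcoef :: "complex \<Rightarrow> complex \<Rightarrow> complex \<Rightarrow> complex \<Rightarrow> nat \<Rightarrow> complex \<Rightarrow> nat \<Rightarrow> nat \<Rightarrow> complex" where
  "Rcoef a b c d N q k l =
     (THE r :: nat \<Rightarrow> complex. (\<forall>i>N. r i = 0) \<and>
        hpoly a q k * hpoly b q (N - k) = (\<Sum>i\<le>N. smult (r i) (cdbasis c d N q i))) l"

end

theory Submission
  imports Defs
begin

text \<open>Since h_{k+j}(x;a) = h_k(x;a) h_j(x;a q^k), both h_{k+j}(x;a) and h_{M+N-k-j}(x;b) split
  into a factor of degree k (resp. M-k) and one of degree j (resp. N-j), the exponent of q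
  going to either factor according to \<alpha> (resp. \<beta>). Expanding the first pair of factors in
  the basis h_m(x;c) h_{M-m}(x;d) and the second in h_n(x;cq^m) h_{N-n}(x;dq^{M-m}), the
  same splitting rule multiplies basis elements to h_{m+n}(x;c) h_{M+N-m-n}(x;d), and the
  identity follows from uniqueness of the coefficients. Existence of the expansions is a
  dimension count: N+1 independent polynomials of degree at most N span all of them.\<close>

lemma hpoly_Suc: "hpoly a q (Suc k) = hpoly a q k * [: 1 + a^2 * q^(2*k), - (a * q^k) :]"
  by (simp add: hpoly_def)

lemma hpoly_add: "hpoly a q (k + j) = hpoly a q k * hpoly (a * q^k) q j"
proof (induction j)
  case 0
  then show ?case by (simp add: hpoly_def)
next
  case (Suc j)
  have shift: "(a * q^k)^2 * q^(2*j) = a^2 * q^(2*(k+j))" "a * q^k * q^j = a * q^(k+j)"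
    by (simp_all add: power_add power_mult_distrib power_mult mult_ac)
  have "hpoly a q (k + Suc j) = hpoly a q (k + j) * [: 1 + a^2 * q^(2*(k+j)), - (a * q^(k+j)) :]"
    by (simp only: add_Suc_right hpoly_Suc)
  also have "\<dots> = hpoly a q k *
      (hpoly (a * q^k) q j * [: 1 + (a * q^k)^2 * q^(2*j), - (a * q^k * q^j) :])"
    by (simp only: Suc.IH shift) (simp only: mult.assoc)
  also have "\<dots> = hpoly a q k * hpoly (a * q^k) q (Suc j)"
    by (simp only: hpoly_Suc)
  finally show ?case .
qed

lemma hpoly_split:
  assumes "\<alpha> \<in> {0, 1}"
  shows "hpoly a q (k + j) = hpoly (a * q^(\<alpha> * j)) q k * hpoly (a * q^((1 - \<alpha>) * k)) q j"
  using assms hpoly_add[of a q k j] hpoly_add[of a q j k] by (auto simp: add.commute mult.commute)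

lemma degree_hpoly_le: "degree (hpoly a q k) \<le> k"
proof (induction k)
  case 0
  then show ?case by (simp add: hpoly_def)
next
  case (Suc k)
  have "degree [: 1 + a^2 * q^(2*k), - (a * q^k) :] \<le> 1" by simp
  then show ?case
    using Suc.IH degree_mult_le[of "hpoly a q k" "[: 1 + a^2 * q^(2*k), - (a * q^k) :]"]
    unfolding hpoly_Suc by linarith
qed

lemma degree_cdbasis_le: "l \<le> N \<Longrightarrow> degree (cdbasis c d N q l) \<le> N"
  unfolding cdbasis_def
  using degree_mult_le[of "hpoly c q l" "hpoly d q (N - l)"] degree_hpoly_le[of c q l]
    degree_hpoly_le[of d q "N - l"]
  by linarith

lemma cdbasis_mult:
  assumes "m \<le> M" "n \<le> N"
  shows "cdbasis c d M q m * cdbasis (c * q^m) (d * q^(M - m)) N q n = cdbasis c d (M + N) q (m + n)"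
proof -
  have "M + N - (m + n) = (M - m) + (N - n)" using assms by simp
  then show ?thesis
    unfolding cdbasis_def using hpoly_add[of c q m n] hpoly_add[of d q "M - m" "N - n"]
    by (simp add: mult_ac)
qed

interpretation poly_vs: vector_space "smult :: 'a::field \<Rightarrow> 'a poly \<Rightarrow> 'a poly"
  by unfold_locales (auto simp: smult_add_right smult_add_left)

lemma poly_vs_span_monoms:
  fixes p :: "'a::field poly"
  assumes "degree p \<le> N"
  shows "p \<in> poly_vs.span (monom 1 ` {..N})"
proof -
  have "p = (\<Sum>i\<le>N. smult (coeff p i) (monom 1 i))"
    using poly_as_sum_of_monoms'[OF assms] by (simp add: smult_monom)
  also have "\<dots> \<in> poly_vs.span (monom 1 ` {..N})"
    by (intro poly_vs.span_sum poly_vs.span_scale poly_vs.span_base) auto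
  finally show ?thesis .
qed

lemma poly_vs_independent_card_le:
  fixes B :: "'a::field poly set"
  assumes "poly_vs.independent B" and "\<And>p. p \<in> B \<Longrightarrow> degree p \<le> N"
  shows "card B \<le> N + 1"
proof -
  let ?W = "monom (1::'a) ` {..N}"
  have "finite B \<and> card B \<le> card ?W"
    using assms poly_vs_span_monoms by (intro poly_vs.independent_span_bound) auto
  moreover have "card ?W \<le> N + 1"
    using card_image_le[of "{..N}" "monom (1::'a)"] by simp
  ultimately show ?thesis by simp
qed

lemma generic_cd_inj_on:
  assumes "generic_cd c d N q"
  shows "inj_on (cdbasis c d N q) {..N}"
proof (rule inj_onI, rule ccontr)
  fix i j
  assume ij: "i \<in> {..N}" "j \<in> {..N}" "cdbasis c d N q i = cdbasis c d N q j" "i \<noteq> j"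
  define r where "r l = (if l = i then 1 :: complex else if l = j then -1 else 0)" for l :: nat
  have "(\<Sum>l\<le>N. smult (r l) (cdbasis c d N q l)) = (\<Sum>l\<in>{i, j}. smult (r l) (cdbasis c d N q l))"
    using ij by (intro sum.mono_neutral_right) (auto simp: r_def)
  also have "\<dots> = 0" using ij by (simp add: r_def)
  finally have "r i = 0" using assms ij unfolding generic_cd_def by blast
  then show False by (simp add: r_def)
qed

lemma generic_cd_independent:
  assumes "generic_cd c d N q"
  shows "poly_vs.independent (cdbasis c d N q ` {..N})"
proof (rule poly_vs.independent_if_scalars_zero)
  fix f p
  assume sum: "(\<Sum>x\<in>cdbasis c d N q ` {..N}. smult (f x) x) = 0"
    and p: "p \<in> cdbasis c d N q ` {..N}"
  have "(\<Sum>l\<le>N. smult (f (cdbasis c d N q l)) (cdbasis c d N q l)) = 0"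
    using sum sum.reindex[OF generic_cd_inj_on[OF assms], of "\<lambda>x. smult (f x) x"] by simp
  then have "\<forall>l\<le>N. f (cdbasis c d N q l) = 0"
    using spec[OF assms[unfolded generic_cd_def], of "\<lambda>l. f (cdbasis c d N q l)"] by simp
  then show "f p = 0" using p by auto
qed simp

lemma generic_cd_span:
  assumes "generic_cd c d N q" and "degree p \<le> N"
  shows "p \<in> poly_vs.span (cdbasis c d N q ` {..N})"
proof (rule ccontr)
  let ?B = "cdbasis c d N q ` {..N}"
  assume p: "p \<notin> poly_vs.span ?B"
  then have "p \<notin> ?B" using poly_vs.span_base by metis
  have "poly_vs.independent (insert p ?B)"
    using poly_vs.independent_insertI[OF p generic_cd_independent[OF assms(1)]] .
  then have "card (insert p ?B) \<le> N + 1"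
    using assms(2) degree_cdbasis_le by (intro poly_vs_independent_card_le) auto
  moreover have "card (insert p ?B) = N + 2"
    using \<open>p \<notin> ?B\<close> card_image[OF generic_cd_inj_on[OF assms(1)]] by simp
  ultimately show False by simp
qed

lemma generic_cd_expansion_exists:
  assumes "generic_cd c d N q" and "degree p \<le> N"
  obtains r where "\<forall>i>N. r i = 0" and "p = (\<Sum>i\<le>N. smult (r i) (cdbasis c d N q i))"
proof -
  obtain u where u: "p = (\<Sum>v\<in>cdbasis c d N q ` {..N}. smult (u v) v)"
    using generic_cd_span[OF assms] poly_vs.span_finite[of "cdbasis c d N q ` {..N}"] by auto
  define r where "r i = (if i \<le> N then u (cdbasis c d N q i) else 0)" for i
  have "p = (\<Sum>i\<le>N. smult (u (cdbasis c d N q i)) (cdbasis c d N q i))"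
    using u sum.reindex[OF generic_cd_inj_on[OF assms(1)], of "\<lambda>v. smult (u v) v"] by simp
  also have "\<dots> = (\<Sum>i\<le>N. smult (r i) (cdbasis c d N q i))"
    by (intro sum.cong) (auto simp: r_def)
  finally show ?thesis by (rule that[rotated]) (simp add: r_def)
qed

lemma generic_cd_expansion_unique:
  assumes "generic_cd c d N q"
    and "\<forall>i>N. r i = 0" and "\<forall>i>N. s i = 0"
    and "(\<Sum>i\<le>N. smult (r i) (cdbasis c d N q i)) = (\<Sum>i\<le>N. smult (s i) (cdbasis c d N q i))"
  shows "r = s"
proof
  fix i
  have "(\<Sum>l\<le>N. smult (r l - s l) (cdbasis c d N q l)) = 0"
    using assms(4) by (simp add: smult_diff_left sum_subtractf)
  then have "\<forall>l\<le>N. r l - s l = 0"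
    using spec[OF assms(1)[unfolded generic_cd_def], of "\<lambda>l. r l - s l"] by simp
  then show "r i = s i" using assms(2,3) by (cases "i \<le> N") auto
qed

lemma Rcoef_eqI:
  assumes "generic_cd c d N q"
    and "\<forall>i>N. r i = 0"
    and "hpoly a q k * hpoly b q (N - k) = (\<Sum>i\<le>N. smult (r i) (cdbasis c d N q i))"
  shows "Rcoef a b c d N q k = r"
proof -
  have "(THE r. (\<forall>i>N. r i = 0) \<and>
      hpoly a q k * hpoly b q (N - k) = (\<Sum>i\<le>N. smult (r i) (cdbasis c d N q i))) = r"
    using assms generic_cd_expansion_unique[OF assms(1)] by (intro the_equality) auto
  then show ?thesis by (simp add: Rcoef_def[abs_def])
qed

lemma Rcoef_expansion:
  assumes "generic_cd c d N q" and "k \<le> N"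
  shows "hpoly a q k * hpoly b q (N - k) = (\<Sum>i\<le>N. smult (Rcoef a b c d N q k i) (cdbasis c d N q i))"
proof -
  have "degree (hpoly a q k * hpoly b q (N - k)) \<le> N"
    using degree_mult_le[of "hpoly a q k" "hpoly b q (N - k)"] degree_hpoly_le[of a q k]
      degree_hpoly_le[of b q "N - k"] assms(2)
    by linarith
  then obtain r where "\<forall>i>N. r i = 0"
    and r: "hpoly a q k * hpoly b q (N - k) = (\<Sum>i\<le>N. smult (r i) (cdbasis c d N q i))"
    using generic_cd_expansion_exists[OF assms(1)] by blast
  with Rcoef_eqI[OF assms(1)] show ?thesis by simp
qed

lemma cdbasis_expansion_mult:
  assumes P: "P = (\<Sum>m\<le>M. smult (r m) (cdbasis c d M q m))"
    and Q: "\<And>m. m \<le> M \<Longrightarrow> Q = (\<Sum>n\<le>N. smult (s m n) (cdbasis (c * q^m) (d * q^(M - m)) N q n))"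
  shows "P * Q = (\<Sum>l\<le>M + N.
    smult (\<Sum>(m, n) \<in> {(m, n). m + n = l \<and> m \<le> M \<and> n \<le> N}. r m * s m n) (cdbasis c d (M + N) q l))"
proof -
  let ?term = "\<lambda>(m, n). smult (r m * s m n) (cdbasis c d (M + N) q (m + n))"
  have "P * Q = (\<Sum>m\<le>M. \<Sum>n\<le>N. ?term (m, n))"
    unfolding P sum_distrib_right
  proof (intro sum.cong refl)
    fix m assume "m \<in> {..M}"
    then show "smult (r m) (cdbasis c d M q m) * Q = (\<Sum>n\<le>N. ?term (m, n))"
      by (simp add: Q sum_distrib_left cdbasis_mult[symmetric] mult_ac)
  qed
  also have "\<dots> = (\<Sum>x \<in> {..M} \<times> {..N}. ?term x)"
    by (simp add: sum.cartesian_product)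
  also have "\<dots> = (\<Sum>l\<le>M + N. \<Sum>x \<in> {x \<in> {..M} \<times> {..N}. fst x + snd x = l}. ?term x)"
    by (rule sum.group[symmetric]) auto
  also have "\<dots> = (\<Sum>l\<le>M + N.
      smult (\<Sum>(m, n) \<in> {(m, n). m + n = l \<and> m \<le> M \<and> n \<le> N}. r m * s m n) (cdbasis c d (M + N) q l))"
  proof (intro sum.cong refl)
    fix l
    have "{x \<in> {..M} \<times> {..N}. fst x + snd x = l} = {(m, n). m + n = l \<and> m \<le> M \<and> n \<le> N}"
      by auto
    then show "(\<Sum>x \<in> {x \<in> {..M} \<times> {..N}. fst x + snd x = l}. ?term x) =
        smult (\<Sum>(m, n) \<in> {(m, n). m + n = l \<and> m \<le> M \<and> n \<le> N}. r m * s m n) (cdbasis c d (M + N) q l)"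
      by (simp add: smult_sum case_prod_beta)
  qed
  finally show ?thesis .
qed

theorem mainTheorem8:
  fixes M N :: nat and a b c d q :: complex and \<alpha> \<beta> k j l :: nat
  assumes gen_total: "generic_cd c d (M + N) q"
    and gen_M: "generic_cd c d M q"
    and gen_N: "\<forall>m\<le>M. generic_cd (c * q^m) (d * q^(M - m)) N q"
    and "\<alpha> \<in> {0, 1}" and "\<beta> \<in> {0, 1}"
    and "k \<le> M" and "j \<le> N" and "l \<le> M + N"
  shows "Rcoef a b c d (M + N) q (k + j) l =
    (\<Sum>(m, n) \<in> {(m, n). m + n = l \<and> m \<le> M \<and> n \<le> N}.
       Rcoef (a * q^(\<alpha> * j)) (b * q^(\<beta> * (N - j))) c d M q k m *
       Rcoef (a * q^((1 - \<alpha>) * k)) (b * q^((1 - \<beta>) * (M - k))) (c * q^m) (d * q^(M - m)) N q j n)"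
proof -
  let ?a\<^sub>1 = "a * q^(\<alpha> * j)" and ?b\<^sub>1 = "b * q^(\<beta> * (N - j))"
  let ?a\<^sub>2 = "a * q^((1 - \<alpha>) * k)" and ?b\<^sub>2 = "b * q^((1 - \<beta>) * (M - k))"
  have "M + N - (k + j) = (M - k) + (N - j)" using \<open>k \<le> M\<close> \<open>j \<le> N\<close> by simp
  then have "hpoly a q (k + j) * hpoly b q (M + N - (k + j)) =
      (hpoly ?a\<^sub>1 q k * hpoly ?b\<^sub>1 q (M - k)) * (hpoly ?a\<^sub>2 q j * hpoly ?b\<^sub>2 q (N - j))"
    using hpoly_split[OF \<open>\<alpha> \<in> {0, 1}\<close>, of a q k j]
      hpoly_split[OF \<open>\<beta> \<in> {0, 1}\<close>, of b q "M - k" "N - j"]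
    by (simp add: mult_ac)
  also have "\<dots> = (\<Sum>l\<le>M + N. smult (\<Sum>(m, n) \<in> {(m, n). m + n = l \<and> m \<le> M \<and> n \<le> N}.
      Rcoef ?a\<^sub>1 ?b\<^sub>1 c d M q k m * Rcoef ?a\<^sub>2 ?b\<^sub>2 (c * q^m) (d * q^(M - m)) N q j n)
      (cdbasis c d (M + N) q l))"
    using gen_N \<open>j \<le> N\<close>
    by (intro cdbasis_expansion_mult Rcoef_expansion[OF gen_M \<open>k \<le> M\<close>] Rcoef_expansion) auto
  finally have "Rcoef a b c d (M + N) q (k + j) =
      (\<lambda>l. \<Sum>(m, n) \<in> {(m, n). m + n = l \<and> m \<le> M \<and> n \<le> N}.
      Rcoef ?a\<^sub>1 ?b\<^sub>1 c d M q k m * Rcoef ?a\<^sub>2 ?b\<^sub>2 (c * q^m) (d * q^(M - m)) N q j n)"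
    by (intro Rcoef_eqI[OF gen_total]) (auto intro!: sum.neutral)
  then show ?thesis by simp
qed

end
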